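(* Let $G_i=(V_i,E_i)$ be a graph of minimum degree $\delta_i$, $i\in\{1,2\}$, let $S\subseteq V_1\times V_2$ and let $k$ be an integer. If for some $i\in\{1,2\}$ the projection $P_{V_i}(S)$ is a $k$-oaf set in $G_i$, then $S$ is a $(k-\delta_j)$-oaf set in $G_1\times G_2$, where $j\in\{1,2\}$, $j\neq i$.
   Context: All graphs are finite and simple. For a graph $G=(V,E)$, a set $S\subseteq V$ and $v\in V$, let $\delta_S(v)=|\{u\in S: uv\in E\}|$, $\overline{S}=V\setminus S$, and let $\partial S$ be the set of vertices of $\overline S$ adjacent to at least one vertex of $S$. For an integer $k$, a non-empty set $S\subseteq V$ is an offensive $k$-alliance if $\delta_S(v)\ge \delta_{\overline S}(v)+k$ for every $v\in \partial S$. A set $X\subseteq V$ is an offensive $k$-alliance free set ($k$-oaf set) if no offensive $k$-alliance $S$ satisfies $S\subseteq X$. The Cartesian product $G_1\times G_2$ of $G_1=(V_1,E_1)$, $G_2=(V_2,E_2)$ has vertex set $V_1\times V_2$, with $(a,b)$ adjacent to $(c,d)$ iff either $a=c$ and $bd\in E_2$, or $b=d$ and $ac\in E_1$. For $A\subseteq V_1\times V_2$, $P_{V_i}(A)$ denotes the projection of $A$ onto $V_i$. *)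

theory Defs
  imports Main
begin

definition simple_graph :: "'a set \<Rightarrow> 'a set set \<Rightarrow> bool" where
  "simple_graph V E \<longleftrightarrow> finite V \<and>
     (\<forall>e\<in>E. \<exists>u v. e = {u, v} \<and> u \<noteq> v \<and> u \<in> V \<and> v \<in> V)"

definition nbr_count :: "'a set set \<Rightarrow> 'a set \<Rightarrow> 'a \<Rightarrow> nat" where
  "nbr_count E S v = card {u \<in> S. {u, v} \<in> E}"

definition degree :: "'a set \<Rightarrow> 'a set set \<Rightarrow> 'a \<Rightarrow> nat" where
  "degree V E v = nbr_count E V v"

definition min_degree :: "'a set \<Rightarrow> 'a set set \<Rightarrow> nat" where
  "min_degree V E = Min (degree V E ` V)"

definition boundary :: "'a set \<Rightarrow> 'a set set \<Rightarrow> 'a set \<Rightarrow> 'a set" where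
  "boundary V E S = {v \<in> V - S. \<exists>u\<in>S. {u, v} \<in> E}"

definition offensive_alliance :: "'a set \<Rightarrow> 'a set set \<Rightarrow> int \<Rightarrow> 'a set \<Rightarrow> bool" where
  "offensive_alliance V E k S \<longleftrightarrow> S \<noteq> {} \<and> S \<subseteq> V \<and>
     (\<forall>v\<in>boundary V E S. int (nbr_count E S v) \<ge> int (nbr_count E (V - S) v) + k)"

definition oaf_set :: "'a set \<Rightarrow> 'a set set \<Rightarrow> int \<Rightarrow> 'a set \<Rightarrow> bool" where
  "oaf_set V E k X \<longleftrightarrow> X \<subseteq> V \<and> (\<forall>S. S \<subseteq> X \<longrightarrow> \<not> offensive_alliance V E k S)"

definition cart_edges :: "'a set \<Rightarrow> 'a set set \<Rightarrow> 'b set \<Rightarrow> 'b set set \<Rightarrow> ('a \<times> 'b) set set" where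
  "cart_edges V1 E1 V2 E2 =
     {{(a, b), (c, d)} | a b c d.
        (a = c \<and> a \<in> V1 \<and> {b, d} \<in> E2) \<or> (b = d \<and> b \<in> V2 \<and> {a, c} \<in> E1)}"

end

theory Submission
  imports Defs
begin

(* Let A \<subseteq> S be an offensive (k - \<delta>2)-alliance of G1 \<times> G2; we show that its
   projection P = fst ` A is an offensive k-alliance of G1, contradicting that fst ` S is
   k-oaf.  For a vertex v \<in> \<partial>P with a neighbour u \<in> P, pick (u,b) \<in> A; then (v,b) \<in> \<partial>A.
   Since v \<notin> P, every neighbour of (v,b) in A lies in the G1-layer of b, so
   \<delta>_A(v,b) \<le> \<delta>_P(v); and outside A, (v,b) sees its whole G2-fibre plus the G1-neighbours
   outside P, so \<delta>_{~A}(v,b) \<ge> \<delta>2 + \<delta>_{~P}(v).  The alliance inequality at (v,b) then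
   gives the one at v.  The projection lemma for the second factor follows by
   transport along the coordinate swap, and the theorem is a short consequence. *)

lemma simple_graph_edge:
  assumes "simple_graph V E" "{x, y} \<in> E"
  shows "x \<noteq> y \<and> x \<in> V \<and> y \<in> V"
proof -
  obtain u v where "{x, y} = {u, v}" "u \<noteq> v" "u \<in> V" "v \<in> V"
    using assms unfolding simple_graph_def by blast
  thus ?thesis by (auto simp: doubleton_eq_iff)
qed

lemma cart_edges_iff:
  "{(a, b), (c, d)} \<in> cart_edges V1 E1 V2 E2 \<longleftrightarrow>
     (a = c \<and> c \<in> V1 \<and> {b, d} \<in> E2) \<or> (b = d \<and> d \<in> V2 \<and> {a, c} \<in> E1)"
  unfolding cart_edges_def by (auto simp: doubleton_eq_iff insert_commute)

lemma swap_edge_in_cart_edges: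
  assumes "e \<in> cart_edges V1 E1 V2 E2"
  shows "prod.swap ` e \<in> cart_edges V2 E2 V1 E1"
proof -
  obtain a b c d where "e = {(a, b), (c, d)}"
    and "(a = c \<and> a \<in> V1 \<and> {b, d} \<in> E2) \<or> (b = d \<and> b \<in> V2 \<and> {a, c} \<in> E1)"
    using assms unfolding cart_edges_def by blast
  thus ?thesis by (auto simp: cart_edges_iff)
qed

lemma cart_edges_swap:
  "cart_edges V2 E2 V1 E1 = image prod.swap ` cart_edges V1 E1 V2 E2"
proof
  show "image prod.swap ` cart_edges V1 E1 V2 E2 \<subseteq> cart_edges V2 E2 V1 E1"
    using swap_edge_in_cart_edges by blast
  show "cart_edges V2 E2 V1 E1 \<subseteq> image prod.swap ` cart_edges V1 E1 V2 E2"
  proof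
    fix e assume "e \<in> cart_edges V2 E2 V1 E1"
    hence "prod.swap ` e \<in> cart_edges V1 E1 V2 E2" by (rule swap_edge_in_cart_edges)
    moreover have "e = prod.swap ` prod.swap ` e" by (simp add: image_image)
    ultimately show "e \<in> image prod.swap ` cart_edges V1 E1 V2 E2" by blast
  qed
qed

lemma edge_image_iff:
  assumes "inj f"
  shows "{f u, f v} \<in> image f ` E \<longleftrightarrow> {u, v} \<in> E"
proof -
  have "inj (image f)"
    by (rule injI) (simp add: inj_image_eq_iff[OF assms])
  thus ?thesis
    using inj_image_mem_iff[of "image f" "{u, v}" E] by simp
qed

lemma nbr_count_image:
  assumes "inj f"
  shows "nbr_count (image f ` E) (f ` S) (f v) = nbr_count E S v"
proof -
  note edge = edge_image_iff[OF assms, of _ v E]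
  have "{w \<in> f ` S. {w, f v} \<in> image f ` E} = f ` {u \<in> S. {u, v} \<in> E}"
    using edge by auto
  thus ?thesis
    unfolding nbr_count_def by (simp add: card_image inj_on_subset[OF assms])
qed

lemma boundary_image:
  assumes "inj f"
  shows "boundary (f ` V) (image f ` E) (f ` S) = f ` boundary V E S"
proof -
  have "(\<exists>u\<in>f ` S. {u, f v} \<in> image f ` E) \<longleftrightarrow> (\<exists>u\<in>S. {u, v} \<in> E)" for v
    by (simp add: edge_image_iff[OF assms])
  thus ?thesis
    unfolding boundary_def image_set_diff[OF assms, symmetric]
    by (force simp: inj_image_mem_iff[OF assms])
qed

lemma offensive_alliance_image:
  assumes "inj f"
  shows "offensive_alliance (f ` V) (image f ` E) k (f ` S) \<longleftrightarrow> offensive_alliance V E k S"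
  unfolding offensive_alliance_def
  by (simp add: boundary_image nbr_count_image assms inj_image_subset_iff
      flip: image_set_diff[OF assms])

text \<open>If v lies outside the projection of A, all neighbours of (v,b) in A share the second
  coordinate b, hence they inject into the G1-neighbours of v in the projection.\<close>
lemma nbr_count_inside_le:
  assumes "finite A" "v \<notin> fst ` A"
  shows "nbr_count (cart_edges V1 E1 V2 E2) A (v, b) \<le> nbr_count E1 (fst ` A) v"
proof -
  have "{p \<in> A. {p, (v, b)} \<in> cart_edges V1 E1 V2 E2}
          \<subseteq> (\<lambda>x. (x, b)) ` {u \<in> fst ` A. {u, v} \<in> E1}"
    using assms(2) by (force simp: cart_edges_iff)
  hence "nbr_count (cart_edges V1 E1 V2 E2) A (v, b)
           \<le> card ((\<lambda>x. (x, b)) ` {u \<in> fst ` A. {u, v} \<in> E1})"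
    unfolding nbr_count_def using assms(1) by (intro card_mono) auto
  also have "\<dots> \<le> nbr_count E1 (fst ` A) v"
    unfolding nbr_count_def by (rule card_image_le) (use assms(1) in simp)
  finally show ?thesis .
qed

text \<open>Outside A, the vertex (v,b) sees its whole G2-fibre and the G1-neighbours of v
  outside the projection; these two families are disjoint.\<close>
lemma nbr_count_outside_ge:
  assumes g1: "simple_graph V1 E1" and g2: "simple_graph V2 E2"
    and v: "v \<in> V1" "v \<notin> fst ` A" and b: "b \<in> V2"
  shows "degree V2 E2 b + nbr_count E1 (V1 - fst ` A) v
           \<le> nbr_count (cart_edges V1 E1 V2 E2) (V1 \<times> V2 - A) (v, b)"
proof -
  have fin1: "finite V1" and fin2: "finite V2"
    using g1 g2 by (auto simp: simple_graph_def)
  define fibre where "fibre = (\<lambda>y. (v, y)) ` {y \<in> V2. {y, b} \<in> E2}"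
  define layer where "layer = (\<lambda>x. (x, b)) ` {x \<in> V1 - fst ` A. {x, v} \<in> E1}"
  have "card fibre = degree V2 E2 b"
    unfolding fibre_def degree_def nbr_count_def by (subst card_image) (auto simp: inj_on_def)
  moreover have "card layer = nbr_count E1 (V1 - fst ` A) v"
    unfolding layer_def nbr_count_def by (subst card_image) (auto simp: inj_on_def)
  moreover have "fibre \<inter> layer = {}"
    unfolding fibre_def layer_def using simple_graph_edge[OF g1] by auto
  ultimately have card_union: "card (fibre \<union> layer) = degree V2 E2 b + nbr_count E1 (V1 - fst ` A) v"
    using fin1 fin2 by (simp add: card_Un_disjoint fibre_def layer_def)
  have "fibre \<union> layer \<subseteq> {p \<in> V1 \<times> V2 - A. {p, (v, b)} \<in> cart_edges V1 E1 V2 E2}"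
    unfolding fibre_def layer_def using v b by (force simp: cart_edges_iff)
  moreover have "finite {p \<in> V1 \<times> V2 - A. {p, (v, b)} \<in> cart_edges V1 E1 V2 E2}"
    using fin1 fin2 by simp
  ultimately have "card (fibre \<union> layer)
      \<le> card {p \<in> V1 \<times> V2 - A. {p, (v, b)} \<in> cart_edges V1 E1 V2 E2}"
    by (rule card_mono[rotated])
  thus ?thesis
    unfolding nbr_count_def card_union .
qed

lemma offensive_alliance_project_fst:
  assumes g1: "simple_graph V1 E1" and g2: "simple_graph V2 E2"
    and oa: "offensive_alliance (V1 \<times> V2) (cart_edges V1 E1 V2 E2) (k - int (min_degree V2 E2)) A"
  shows "offensive_alliance V1 E1 k (fst ` A)"
  unfolding offensive_alliance_def
proof (intro conjI ballI)
  let ?E = "cart_edges V1 E1 V2 E2"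
  have AV: "A \<subseteq> V1 \<times> V2" and fin2: "finite V2"
    using oa g2 by (auto simp: offensive_alliance_def simple_graph_def)
  have finA: "finite A"
    using g1 g2 AV by (meson finite_SigmaI finite_subset simple_graph_def)
  show "fst ` A \<noteq> {}" "fst ` A \<subseteq> V1"
    using oa AV by (auto simp: offensive_alliance_def)
  fix v assume "v \<in> boundary V1 E1 (fst ` A)"
  then obtain u where v: "v \<in> V1" "v \<notin> fst ` A" and u: "u \<in> fst ` A" "{u, v} \<in> E1"
    unfolding boundary_def by blast
  then obtain b where ub: "(u, b) \<in> A" by auto
  with AV have b: "b \<in> V2" by auto
  have "(v, b) \<in> boundary (V1 \<times> V2) ?E A"
    unfolding boundary_def using v b ub u(2) by (force simp: cart_edges_iff)
  hence "int (nbr_count ?E (V1 \<times> V2 - A) (v, b)) + (k - int (min_degree V2 E2))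
           \<le> int (nbr_count ?E A (v, b))"
    using oa unfolding offensive_alliance_def by blast
  moreover have "min_degree V2 E2 \<le> degree V2 E2 b"
    unfolding min_degree_def using b fin2 by simp
  ultimately show "int (nbr_count E1 (V1 - fst ` A) v) + k \<le> int (nbr_count E1 (fst ` A) v)"
    using nbr_count_inside_le[OF finA v(2), of V1 E1 V2 E2 b]
      nbr_count_outside_ge[OF g1 g2 v b] by linarith
qed

text \<open>The symmetric statement for the second factor, by transport along the swap.\<close>
lemma offensive_alliance_project_snd:
  assumes g1: "simple_graph V1 E1" and g2: "simple_graph V2 E2"
    and oa: "offensive_alliance (V1 \<times> V2) (cart_edges V1 E1 V2 E2) (k - int (min_degree V1 E1)) A"
  shows "offensive_alliance V2 E2 k (snd ` A)"
proof -
  have inj_swap: "inj (prod.swap :: 'a \<times> 'b \<Rightarrow> 'b \<times> 'a)"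
    by (metis injI swap_swap)
  have "offensive_alliance (prod.swap ` (V1 \<times> V2)) (image prod.swap ` cart_edges V1 E1 V2 E2)
          (k - int (min_degree V1 E1)) (prod.swap ` A)"
    using offensive_alliance_image[OF inj_swap] oa by blast
  hence "offensive_alliance (V2 \<times> V1) (cart_edges V2 E2 V1 E1)
           (k - int (min_degree V1 E1)) (prod.swap ` A)"
    unfolding product_swap cart_edges_swap[symmetric] .
  moreover have "fst ` prod.swap ` A = snd ` A"
    by (simp add: image_image)
  ultimately show ?thesis
    using offensive_alliance_project_fst[OF g2 g1] by metis
qed

lemma oaf_set_by_projection:
  assumes "S \<subseteq> V" and free: "oaf_set W F k (p ` S)"
    and project: "\<And>A. offensive_alliance V E k' A \<Longrightarrow> offensive_alliance W F k (p ` A)"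
  shows "oaf_set V E k' S"
  unfolding oaf_set_def
proof (intro conjI allI impI notI)
  show "S \<subseteq> V" by fact
  fix A assume "A \<subseteq> S" and "offensive_alliance V E k' A"
  hence "p ` A \<subseteq> p ` S" and "offensive_alliance W F k (p ` A)"
    using project by auto
  thus False
    using free unfolding oaf_set_def by blast
qed

theorem theorem3:
  fixes V1 :: "'a set" and E1 :: "'a set set" and V2 :: "'b set" and E2 :: "'b set set"
    and S :: "('a \<times> 'b) set" and k :: int
  assumes "simple_graph V1 E1" and "simple_graph V2 E2"
    and "S \<subseteq> V1 \<times> V2"
  shows "(oaf_set V1 E1 k (fst ` S) \<longrightarrow>
            oaf_set (V1 \<times> V2) (cart_edges V1 E1 V2 E2) (k - int (min_degree V2 E2)) S)
       \<and> (oaf_set V2 E2 k (snd ` S) \<longrightarrow>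
            oaf_set (V1 \<times> V2) (cart_edges V1 E1 V2 E2) (k - int (min_degree V1 E1)) S)"
proof (intro conjI impI)
  show "oaf_set (V1 \<times> V2) (cart_edges V1 E1 V2 E2) (k - int (min_degree V2 E2)) S"
    if "oaf_set V1 E1 k (fst ` S)"
    using oaf_set_by_projection[OF assms(3) that]
      offensive_alliance_project_fst[OF assms(1,2)] by blast
  show "oaf_set (V1 \<times> V2) (cart_edges V1 E1 V2 E2) (k - int (min_degree V1 E1)) S"
    if "oaf_set V2 E2 k (snd ` S)"
    using oaf_set_by_projection[OF assms(3) that]
      offensive_alliance_project_snd[OF assms(1,2)] by blast
qed

end
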